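(* Let $\Lambda$ be a Euclidean lattice of minimum $m$ and rank $d$ containing two distinct sublattices $\Lambda'$ and $\Lambda''$ which are both perfect, of minimum $m$ and of rank $d-1$. Suppose that $\Lambda'+\Lambda''$ has rank $d$, and that $\Lambda$ contains a minimal vector $v$ such that $\mathbb Qv\cap\Lambda'=\mathbb Qv\cap\Lambda''=\{0\}$. Then $\Lambda$ is perfect.
   Context: The minimum of a lattice is the smallest squared Euclidean norm of a nonzero element; minimal vectors are the nonzero elements realising it. A lattice $L$ of rank $n$ is perfect if $\{v\otimes v\}$, $v$ ranging over its minimal vectors, spans the $\binom{n+1}{2}$-dimensional space of symmetric tensors in $(L\otimes\mathbb R)\otimes(L\otimes\mathbb R)$. *)

theory Defs
  imports "HOL-Analysis.Analysis"
begin

definition euclidean_lattice :: "(real^'n) set \<Rightarrow> bool" where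
  "euclidean_lattice L \<longleftrightarrow>
     (\<exists>B. independent B \<and> L = range (\<lambda>c::(real^'n) \<Rightarrow> int. \<Sum>b\<in>B. of_int (c b) *\<^sub>R b))"

definition lattice_rank :: "(real^'n) set \<Rightarrow> nat" where
  "lattice_rank L = dim L"

definition sublattice :: "(real^'n) set \<Rightarrow> (real^'n) set \<Rightarrow> bool" where
  "sublattice L' L \<longleftrightarrow> euclidean_lattice L' \<and> L' \<subseteq> L"

definition lattice_min :: "(real^'n) set \<Rightarrow> real" where
  "lattice_min L = Inf {(norm v)^2 | v. v \<in> L \<and> v \<noteq> 0}"

definition min_vectors :: "(real^'n) set \<Rightarrow> (real^'n) set" where
  "min_vectors L = {v \<in> L. v \<noteq> 0 \<and> (norm v)^2 = lattice_min L}"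

definition outer_sq :: "real^'n \<Rightarrow> real^'n^'n" where
  "outer_sq v = (\<chi> i j. v $ i * v $ j)"

text \<open>Perfect: the tensors v \<otimes> v over minimal vectors span the space of symmetric
  tensors on span L, which has dimension binomial (rank+1) 2; since all v \<otimes> v lie in it,
  this says their span has that dimension.\<close>
definition perfect :: "(real^'n) set \<Rightarrow> bool" where
  "perfect L \<longleftrightarrow> dim (outer_sq ` min_vectors L) = (lattice_rank L + 1) choose 2"

definition lattice_sum :: "(real^'n) set \<Rightarrow> (real^'n) set \<Rightarrow> (real^'n) set" where
  "lattice_sum A B = {x + y | x y. x \<in> A \<and> y \<in> B}"

definition rat_line :: "real^'n \<Rightarrow> (real^'n) set" where
  "rat_line v = {of_rat q *\<^sub>R v | q. True}"

end

theory Submission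
  imports Defs
begin

text \<open>Let a be a normal vector of span \<Lambda>' inside span \<Lambda>, and let \<psi> M = M a on the span T
  of the squares v \<otimes> v of minimal vectors of \<Lambda>. Since \<Lambda>' is perfect with the same minimum,
  T contains the squares of all of span \<Lambda>'; they lie in the kernel of \<psi> and span a space of
  dimension d choose 2. Since \<psi> (x \<otimes> x) = (x \<bullet> a) x, the image of \<psi> contains v (which is not in
  span \<Lambda>': a lattice containing a nonzero real multiple of v contains a nonzero integer multiple)
  and, by polarization against a vector of \<Lambda>'' not orthogonal to a, all of span \<Lambda>''; so it has
  dimension d. Rank-nullity gives dim T \<ge> (d choose 2) + d = (d + 1) choose 2.\<close>

definition outer :: "real^'n \<Rightarrow> real^'n \<Rightarrow> real^'n^'n" where
  "outer x y = (\<chi> i j. x $ i * y $ j)"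

lemma outer_sq_eq_outer: "outer_sq x = outer x x"
  by (simp add: outer_sq_def outer_def)

lemma outer_sq_add: "outer_sq (x + y) = outer_sq x + outer_sq y + (outer x y + outer y x)"
  by (simp add: vec_eq_iff outer_sq_def outer_def algebra_simps)

lemma outer_sq_sum:
  "outer_sq (\<Sum>b\<in>B. c b *\<^sub>R b) = (\<Sum>b\<in>B. \<Sum>b'\<in>B. (c b * c b') *\<^sub>R outer b b')"
proof -
  have "(\<Sum>b\<in>B. c b * b $ i) * (\<Sum>b\<in>B. c b * b $ j) =
      (\<Sum>b\<in>B. \<Sum>b'\<in>B. c b * c b' * (b $ i * b' $ j))" for i j
    by (simp add: sum_product mult_ac)
  then show ?thesis
    by (simp add: vec_eq_iff outer_sq_def outer_def)
qed

lemma outer_sq_sum_symmetric: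
  "outer_sq (\<Sum>b\<in>B. c b *\<^sub>R b) =
     (\<Sum>b\<in>B. \<Sum>b'\<in>B. (c b * c b' / 2) *\<^sub>R (outer b b' + outer b' b))"
proof -
  have swap: "(\<Sum>b\<in>B. \<Sum>b'\<in>B. (c b * c b') *\<^sub>R outer b' b) = outer_sq (\<Sum>b\<in>B. c b *\<^sub>R b)"
    by (subst sum.swap) (simp add: outer_sq_sum mult.commute)
  have "(\<Sum>b\<in>B. \<Sum>b'\<in>B. (c b * c b' / 2) *\<^sub>R (outer b b' + outer b' b)) =
      (1/2) *\<^sub>R ((\<Sum>b\<in>B. \<Sum>b'\<in>B. (c b * c b') *\<^sub>R outer b b') +
        (\<Sum>b\<in>B. \<Sum>b'\<in>B. (c b * c b') *\<^sub>R outer b' b))"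
    by (simp add: scaleR_add_right sum.distrib scaleR_sum_right)
  then show ?thesis
    by (simp add: swap flip: outer_sq_sum)
qed

lemma outer_sq_mult_vector: "outer_sq x *v a = (x \<bullet> a) *\<^sub>R x"
  by (simp add: vec_eq_iff outer_sq_def matrix_vector_mult_def inner_vec_def sum_distrib_left mult_ac)

lemma linear_matrix_vector_mult_left: "linear (\<lambda>M::real^'n^'m. M *v a)"
  by (rule linearI) (simp_all add: matrix_vector_mult_add_rdistrib scaleR_matrix_vector_assoc)

lemma dim_outer_sq_span_le: "dim (outer_sq ` span X) \<le> (dim X + 1) choose 2"
proof -
  obtain B where "B \<subseteq> X" and "independent B" and "X \<subseteq> span B" and cB: "card B = dim X"
    using basis_exists[of X] by metis
  then have fB: "finite B" and spXB: "span X = span B"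
    using finiteI_independent span_eq span_superset by blast+
  \<comment> \<open>By polarization the squares of the basis vectors and of the sums of two of them span all
    squares; there are n + (n choose 2) = (n + 1) choose 2 of them.\<close>
  define I where "I = {A. A \<subseteq> B \<and> card A = 1} \<union> {A. A \<subseteq> B \<and> card A = 2}"
  define G where "G = (\<lambda>A. outer_sq (\<Sum>A)) ` I"
  have "card I = card B + (card B choose 2)"
    unfolding I_def by (subst card_Un_disjoint) (use fB in \<open>auto simp: n_subsets\<close>)
  then have cG: "card G \<le> (dim X + 1) choose 2"
    unfolding G_def using cB card_image_le[of I] fB by (simp add: I_def numeral_2_eq_2)
  have square: "outer_sq x \<in> span G" if "x \<in> B" for x
  proof -
    have "{x} \<in> I" using that unfolding I_def by auto
    then show ?thesis unfolding G_def by (auto intro!: span_base image_eqI[where x="{x}"])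
  qed
  have sym: "outer x y + outer y x \<in> span G" if "x \<in> B" "y \<in> B" for x y
  proof (cases "x = y")
    case True
    then show ?thesis
      using span_scale[OF square, of x 2] that by (simp add: outer_sq_eq_outer scaleR_2)
  next
    case False
    then have "{x,y} \<in> I" using that unfolding I_def by auto
    then have "outer_sq (x + y) \<in> span G"
      using False unfolding G_def by (auto intro!: span_base image_eqI[where x="{x,y}"])
    then have "outer_sq (x + y) - outer_sq x - outer_sq y \<in> span G"
      using that square by (intro span_diff)
    then show ?thesis by (simp add: outer_sq_add)
  qed
  have "outer_sq ` span X \<subseteq> span G"
  proof
    fix M assume "M \<in> outer_sq ` span X"
    then obtain c where "M = outer_sq (\<Sum>b\<in>B. c b *\<^sub>R b)"
      using spXB span_finite[OF fB] by auto
    also have "\<dots> \<in> span G"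
      unfolding outer_sq_sum_symmetric by (intro span_sum span_scale sym) auto
    finally show "M \<in> span G" .
  qed
  moreover have "finite G"
    unfolding G_def I_def using fB by simp
  ultimately have "dim (outer_sq ` span X) \<le> card G"
    by (rule dim_le_card)
  then show ?thesis using cG by (rule order.trans)
qed

lemma dim_kernel_plus_dim_image:
  fixes f :: "'a::euclidean_space \<Rightarrow> 'b::euclidean_space"
  assumes f: "linear f" and T: "subspace T"
  shows "dim (T \<inter> {x. f x = 0}) + dim (f ` T) = dim T"
proof -
  define K where "K = T \<inter> {x. f x = 0}"
  define Q where "Q = {y \<in> T. \<forall>x \<in> K. orthogonal x y}"
  have K: "subspace K" "K \<subseteq> T"
    unfolding K_def using subspace_inter[OF T linear_subspace_kernel[OF f]] by auto
  have "Q = T \<inter> {y. \<forall>x \<in> K. orthogonal x y}" unfolding Q_def by blast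
  then have Q: "subspace Q"
    using subspace_inter[OF T subspace_orthogonal_to_vectors[of K]] by simp
  have "inj_on f Q"
  proof (subst linear_inj_on_iff_eq_0[OF f Q], intro ballI impI)
    fix x assume "x \<in> Q" "f x = 0"
    then have "orthogonal x x" unfolding Q_def K_def by auto
    then show "x = 0" by (simp add: orthogonal_self)
  qed
  moreover have "span Q = Q" using Q by simp
  ultimately have dimQ: "dim (f ` Q) = dim Q"
    using dim_image_eq[OF f, of Q] by metis
  have "f ` T = f ` Q"
  proof
    show "f ` Q \<subseteq> f ` T" unfolding Q_def by auto
  next
    show "f ` T \<subseteq> f ` Q"
    proof
      fix y assume "y \<in> f ` T"
      then obtain x where x: "x \<in> T" "y = f x" by blast
      obtain p z where p: "p \<in> span K" and z: "\<And>w. w \<in> span K \<Longrightarrow> orthogonal z w"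
        and xpz: "x = p + z"
        using orthogonal_subspace_decomp_exists[of K x] by metis
      have "span K = K" using K(1) by simp
      with p have "p \<in> K" by simp
      have "z = x - p" using xpz by simp
      then have "z \<in> T" using subspace_diff[OF T x(1)] \<open>p \<in> K\<close> K(2) by blast
      moreover have "f z = y" using xpz x(2) \<open>p \<in> K\<close> linear_add[OF f] unfolding K_def by simp
      moreover have "\<forall>w \<in> K. orthogonal w z"
        using z span_superset by (auto simp: orthogonal_commute)
      ultimately show "y \<in> f ` Q" unfolding Q_def by auto
    qed
  qed
  then show ?thesis
    using dimQ dim_subspace_orthogonal_to_vectors[OF K(1) T K(2)] unfolding K_def Q_def by simp
qed

lemma hyperplane_normal_exists:
  fixes U W :: "'a::euclidean_space set"
  assumes U: "subspace U" and W: "subspace W" and UW: "U \<subseteq> W" and dimU: "dim U + 1 = dim W"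
  obtains a where "a \<in> W" "a \<noteq> 0" "U = {x \<in> W. a \<bullet> x = 0}"
proof -
  have sU: "span U = U" and sW: "span W = W" using U W by simp_all
  have "U \<noteq> W" using dimU by auto
  then have "span U \<subset> span W" using UW by (simp add: sU sW psubset_eq)
  then obtain a where a: "a \<noteq> 0" "a \<in> W" and aU: "\<And>x. x \<in> U \<Longrightarrow> a \<bullet> x = 0"
    using orthogonal_to_subspace_exists_gen[of U W] U W
    unfolding orthogonal_def sU sW by blast
  have "x \<in> U" if x: "x \<in> W" "a \<bullet> x = 0" for x
  proof -
    have "a \<notin> span U" using a aU[of a] unfolding sU by auto
    then have "dim (insert a U) = dim W" using dim_insert[of a U] dimU by simp
    moreover have "insert a U \<subseteq> W" using a UW by blast
    ultimately have "span (insert a U) = W"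
      using dim_eq_span[of "insert a U" W] unfolding sW by simp
    then obtain t where t: "x - t *\<^sub>R a \<in> U"
      using x(1) span_breakdown_eq[of x a U] unfolding sU by blast
    then have "t * (a \<bullet> a) = 0"
      using aU[OF t] x by (simp add: inner_diff_right)
    then show ?thesis using t a by simp
  qed
  then have "U = {x \<in> W. a \<bullet> x = 0}" using aU UW by auto
  with a show thesis by (intro that)
qed

lemma outer_sq_in_image_mult_vector:
  assumes "subspace T" "outer_sq x \<in> T" "x \<bullet> a \<noteq> 0"
  shows "x \<in> (\<lambda>M. M *v a) ` T"
proof (rule image_eqI)
  show "(1 / (x \<bullet> a)) *\<^sub>R outer_sq x \<in> T" using assms by (simp add: subspace_scale)
  show "x = ((1 / (x \<bullet> a)) *\<^sub>R outer_sq x) *v a"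
    using assms(3) by (simp add: outer_sq_mult_vector flip: scaleR_matrix_vector_assoc)
qed

lemma subspace_subset_image_mult_vector:
  assumes T: "subspace T" and U: "subspace U" and UT: "outer_sq ` U \<subseteq> T"
    and u0: "u0 \<in> U" "u0 \<bullet> a \<noteq> 0"
  shows "U \<subseteq> (\<lambda>M. M *v a) ` T"
proof
  fix u assume u: "u \<in> U"
  define I where "I = (\<lambda>M. M *v a) ` T"
  have I: "subspace I" unfolding I_def using linear_matrix_vector_mult_left T
    by (rule linear_subspace_image)
  have "u0 \<in> I" unfolding I_def using T UT u0 by (intro outer_sq_in_image_mult_vector) auto
  have "outer_sq (u + u0) - outer_sq u - outer_sq u0 \<in> T"
    using T UT u u0(1) subspace_add[OF U u u0(1)] by (intro subspace_diff) auto
  then have "(outer_sq (u + u0) - outer_sq u - outer_sq u0) *v a \<in> I" unfolding I_def by blast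
  moreover have "(outer_sq (u + u0) - outer_sq u - outer_sq u0) *v a =
      (u0 \<bullet> a) *\<^sub>R u + (u \<bullet> a) *\<^sub>R u0"
    by (simp add: outer_sq_mult_vector algebra_simps)
  ultimately have "(u0 \<bullet> a) *\<^sub>R u \<in> I"
    using subspace_diff[OF I _ subspace_scale[OF I \<open>u0 \<in> I\<close>, of "u \<bullet> a"]] by fastforce
  with I have "(1 / (u0 \<bullet> a)) *\<^sub>R ((u0 \<bullet> a) *\<^sub>R u) \<in> I" by (rule subspace_scale)
  then show "u \<in> I" using u0(2) by simp
qed

lemma dim_ge_if_contains_squares_of_two_hyperplanes:
  fixes U U' W :: "(real^'n) set" and T :: "(real^'n^'n) set"
  assumes T: "subspace T" and U: "subspace U" and U': "subspace U'" and W: "subspace W"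
    and UW: "U \<subseteq> W" and U'W: "U' \<subseteq> W"
    and dimU: "dim U + 1 = dim W" and dimU': "dim U' + 1 = dim W" and U'U: "\<not> U' \<subseteq> U"
    and v: "v \<in> W" "v \<notin> U" "v \<notin> U'"
    and UT: "outer_sq ` U \<subseteq> T" and U'T: "outer_sq ` U' \<subseteq> T" and vT: "outer_sq v \<in> T"
    and dim_squares: "dim W choose 2 \<le> dim (outer_sq ` U)"
  shows "(dim W + 1) choose 2 \<le> dim T"
proof -
  obtain a where "a \<in> W" "a \<noteq> 0" and Ua: "U = {x \<in> W. a \<bullet> x = 0}"
    using hyperplane_normal_exists[OF U W UW dimU] .
  define \<psi> where "\<psi> = (\<lambda>M::real^'n^'n. M *v a)"
  have "v \<bullet> a \<noteq> 0" using v Ua by (auto simp: inner_commute)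
  then have "v \<in> \<psi> ` T" unfolding \<psi>_def using T vT by (rule outer_sq_in_image_mult_vector[rotated 2])
  moreover obtain u0 where "u0 \<in> U'" "u0 \<bullet> a \<noteq> 0" using U'U U'W Ua by (auto simp: inner_commute)
  then have "U' \<subseteq> \<psi> ` T" unfolding \<psi>_def using T U' U'T by (intro subspace_subset_image_mult_vector)
  ultimately have "insert v U' \<subseteq> \<psi> ` T" by blast
  moreover have "dim (insert v U') = dim W"
    using dim_insert[of v U'] v(3) dimU' span_eq_iff[THEN iffD2, OF U'] by simp
  ultimately have image: "dim W \<le> dim (\<psi> ` T)" by (metis dim_subset)
  have "outer_sq ` U \<subseteq> T \<inter> {M. \<psi> M = 0}"
    using UT Ua by (auto simp: \<psi>_def outer_sq_mult_vector inner_commute)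
  then have kernel: "dim W choose 2 \<le> dim (T \<inter> {M. \<psi> M = 0})"
    using dim_squares dim_subset order_trans by blast
  have "dim (T \<inter> {M. \<psi> M = 0}) + dim (\<psi> ` T) = dim T"
    unfolding \<psi>_def using linear_matrix_vector_mult_left T by (rule dim_kernel_plus_dim_image)
  with image kernel show ?thesis by (simp add: numeral_2_eq_2)
qed

lemma euclidean_lattice_basis:
  fixes L :: "(real^'n) set"
  assumes "euclidean_lattice L"
  obtains B where "independent B" "finite B"
    "L = range (\<lambda>c::(real^'n) \<Rightarrow> int. \<Sum>b\<in>B. of_int (c b) *\<^sub>R b)" "span L = span B"
proof -
  obtain B where B: "independent B"
    and L: "L = range (\<lambda>c::(real^'n) \<Rightarrow> int. \<Sum>b\<in>B. of_int (c b) *\<^sub>R b)"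
    using assms unfolding euclidean_lattice_def by blast
  have fB: "finite B" using B finiteI_independent by blast
  have "B \<subseteq> L"
  proof
    fix b assume "b \<in> B"
    then have "(\<Sum>x\<in>B. of_int (if x = b then 1 else 0) *\<^sub>R x) = (\<Sum>x\<in>B. if x = b then x else 0)"
      by (intro sum.cong) auto
    also have "\<dots> = b" using fB \<open>b \<in> B\<close> by simp
    finally show "b \<in> L" unfolding L by (intro image_eqI[where x="\<lambda>x. if x = b then 1 else 0"]) auto
  qed
  moreover have "L \<subseteq> span B"
    unfolding L by (simp add: image_subset_iff span_sum span_scale span_base)
  ultimately have "span L = span B" using span_eq[of L B] span_superset by blast
  with B fB L show thesis by (rule that)
qed

lemma euclidean_lattice_diff:
  fixes L :: "(real^'n) set"
  assumes "euclidean_lattice L" "x \<in> L" "y \<in> L"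
  shows "x - y \<in> L"
proof -
  obtain B where L: "L = range (\<lambda>c::(real^'n) \<Rightarrow> int. \<Sum>b\<in>B. of_int (c b) *\<^sub>R b)"
    using assms(1) unfolding euclidean_lattice_def by blast
  obtain cx cy where "x = (\<Sum>b\<in>B. of_int (cx b) *\<^sub>R b)" "y = (\<Sum>b\<in>B. of_int (cy b) *\<^sub>R b)"
    using assms(2,3) L by auto
  then have "x - y = (\<Sum>b\<in>B. of_int (cx b - cy b) *\<^sub>R b)"
    by (simp add: sum_subtractf scaleR_diff_left)
  then show ?thesis unfolding L by (intro image_eqI[where x="\<lambda>b. cx b - cy b"]) auto
qed

lemma euclidean_lattice_scaleR_of_int:
  fixes L :: "(real^'n) set"
  assumes "euclidean_lattice L" "x \<in> L"
  shows "of_int k *\<^sub>R x \<in> L"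
proof -
  obtain B where L: "L = range (\<lambda>c::(real^'n) \<Rightarrow> int. \<Sum>b\<in>B. of_int (c b) *\<^sub>R b)"
    using assms(1) unfolding euclidean_lattice_def by blast
  obtain cx where "x = (\<Sum>b\<in>B. of_int (cx b) *\<^sub>R b)"
    using assms(2) L by auto
  then have "of_int k *\<^sub>R x = (\<Sum>b\<in>B. of_int (k * cx b) *\<^sub>R b)"
    by (simp add: scaleR_sum_right)
  then show ?thesis unfolding L by (intro image_eqI[where x="\<lambda>b. k * cx b"]) auto
qed

lemma independent_coefficient_bound:
  fixes B :: "'a::euclidean_space set"
  assumes B: "independent B" and "\<beta> \<in> B"
  obtains C where "\<And>c. \<bar>c \<beta>\<bar> \<le> C * norm (\<Sum>b\<in>B. c b *\<^sub>R b)"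
proof -
  have fB: "finite B" using B finiteI_independent by blast
  obtain g :: "'a \<Rightarrow> real"
    where g: "linear g" "\<And>x. x \<in> B \<Longrightarrow> g x = (if x = \<beta> then 1 else 0)"
    using linear_independent_extend[OF B, of "\<lambda>x. if x = \<beta> then 1 else 0"] by blast
  obtain C where C: "\<And>x. norm (g x) \<le> C * norm x" using linear_bounded[OF g(1)] by blast
  have g_sum: "g (\<Sum>b\<in>B. c b *\<^sub>R b) = c \<beta>" for c
  proof -
    have "g (\<Sum>b\<in>B. c b *\<^sub>R b) = (\<Sum>b\<in>B. c b * g b)"
      using g(1) by (simp add: linear_sum linear_scale)
    also have "\<dots> = (\<Sum>b\<in>B. if b = \<beta> then c b else 0)"
      using g(2) by (intro sum.cong) auto
    finally show ?thesis using fB \<open>\<beta> \<in> B\<close> by simp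
  qed
  show thesis
  proof (rule that)
    fix c :: "'a \<Rightarrow> real"
    show "\<bar>c \<beta>\<bar> \<le> C * norm (\<Sum>b\<in>B. c b *\<^sub>R b)"
      using C[of "\<Sum>b\<in>B. c b *\<^sub>R b"] by (simp add: g_sum)
  qed
qed

lemma euclidean_lattice_bounded_finite:
  fixes L :: "(real^'n) set"
  assumes "euclidean_lattice L"
  shows "finite {x \<in> L. norm x \<le> R}"
proof -
  obtain B where B: "independent B" "finite B"
    and L: "L = range (\<lambda>c::(real^'n) \<Rightarrow> int. \<Sum>b\<in>B. of_int (c b) *\<^sub>R b)"
    and "span L = span B"
    by (rule euclidean_lattice_basis[OF assms])
  have "\<forall>\<beta>\<in>B. \<exists>C. \<forall>c. \<bar>c \<beta>\<bar> \<le> C * norm (\<Sum>b\<in>B. c b *\<^sub>R b)"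
  proof
    fix \<beta> assume "\<beta> \<in> B"
    obtain C where "\<And>c. \<bar>c \<beta>\<bar> \<le> C * norm (\<Sum>b\<in>B. c b *\<^sub>R b)"
      using independent_coefficient_bound[OF B(1) \<open>\<beta> \<in> B\<close>] by blast
    then show "\<exists>C. \<forall>c. \<bar>c \<beta>\<bar> \<le> C * norm (\<Sum>b\<in>B. c b *\<^sub>R b)" by blast
  qed
  then obtain C where C: "\<forall>\<beta>\<in>B. \<forall>c. \<bar>c \<beta>\<bar> \<le> C \<beta> * norm (\<Sum>b\<in>B. c b *\<^sub>R b)"
    by (rule bchoice[THEN exE])
  define M where "M = \<lceil>(\<Sum>\<beta>\<in>B. \<bar>C \<beta>\<bar>) * \<bar>R\<bar>\<rceil>"
  have "{x \<in> L. norm x \<le> R} \<subseteq> (\<lambda>c. \<Sum>b\<in>B. of_int (c b) *\<^sub>R b) ` (B \<rightarrow>\<^sub>E {-M..M})"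
  proof
    fix x assume "x \<in> {x \<in> L. norm x \<le> R}"
    then obtain c where x: "x = (\<Sum>b\<in>B. of_int (c b) *\<^sub>R b)" and R: "norm x \<le> R"
      using L by auto
    have "c \<beta> \<in> {-M..M}" if "\<beta> \<in> B" for \<beta>
    proof -
      have "\<bar>of_int (c \<beta>)\<bar> \<le> C \<beta> * norm x"
        using C[rule_format, OF that, of "\<lambda>b. of_int (c b)"] unfolding x by simp
      also have "\<dots> \<le> \<bar>C \<beta>\<bar> * \<bar>R\<bar>"
        using R by (intro mult_mono) auto
      also have "\<dots> \<le> (\<Sum>\<beta>\<in>B. \<bar>C \<beta>\<bar>) * \<bar>R\<bar>"
        using member_le_sum[OF that, of "\<lambda>\<beta>. \<bar>C \<beta>\<bar>"] B(2) by (intro mult_right_mono) auto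
      also have "\<dots> \<le> of_int M" unfolding M_def by (rule le_of_int_ceiling)
      finally have "\<bar>c \<beta>\<bar> \<le> M" by linarith
      then show ?thesis by (simp add: abs_le_iff)
    qed
    then have "restrict c B \<in> B \<rightarrow>\<^sub>E {-M..M}" by (simp add: restrict_PiE_iff)
    moreover have "x = (\<Sum>b\<in>B. of_int (restrict c B b) *\<^sub>R b)"
      unfolding x by (rule sum.cong) simp_all
    ultimately show "x \<in> (\<lambda>c. \<Sum>b\<in>B. of_int (c b) *\<^sub>R b) ` (B \<rightarrow>\<^sub>E {-M..M})"
      by (rule rev_image_eqI[where x="restrict c B"])
  qed
  moreover have "finite (B \<rightarrow>\<^sub>E {-M..M})" using B(2) by (intro finite_PiE) auto
  ultimately show ?thesis using finite_subset by blast
qed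

text \<open>Pigeonhole on the fractional parts: the vectors k v - y k, with y k \<in> L' obtained by rounding
  the coefficients of k v down, lie in a bounded region of L, so two of them coincide.\<close>
lemma euclidean_lattice_multiple_in_sublattice:
  fixes L L' :: "(real^'n) set"
  assumes L: "euclidean_lattice L" and L': "sublattice L' L" and v: "v \<in> L" "v \<in> span L'"
  obtains k :: nat where "k > 0" "real k *\<^sub>R v \<in> L'"
proof -
  have L'_lattice: "euclidean_lattice L'" and "L' \<subseteq> L" using L' unfolding sublattice_def by auto
  obtain B where "independent B" "finite B"
    and L'_range: "L' = range (\<lambda>c::(real^'n) \<Rightarrow> int. \<Sum>b\<in>B. of_int (c b) *\<^sub>R b)"
    and "span L' = span B"
    by (rule euclidean_lattice_basis[OF L'_lattice])
  then obtain r where v_sum: "v = (\<Sum>b\<in>B. r b *\<^sub>R b)" using v(2) span_finite[of B] by auto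
  define y where "y k = (\<Sum>b\<in>B. of_int \<lfloor>real k * r b\<rfloor> *\<^sub>R b)" for k :: nat
  define w where "w k = real k *\<^sub>R v - y k" for k :: nat
  have y: "y k \<in> L'" for k
    unfolding y_def L'_range by (intro image_eqI[where x="\<lambda>b. \<lfloor>real k * r b\<rfloor>"]) auto
  have "w k \<in> L" for k
    unfolding w_def using euclidean_lattice_diff[OF L euclidean_lattice_scaleR_of_int[OF L v(1), of "int k"]]
      y \<open>L' \<subseteq> L\<close> by auto
  moreover have "norm (w k) \<le> (\<Sum>b\<in>B. norm b)" for k
  proof -
    have "w k = (\<Sum>b\<in>B. frac (real k * r b) *\<^sub>R b)"
      unfolding w_def y_def v_sum frac_def by (simp add: scaleR_diff_left sum_subtractf scaleR_sum_right)
    also have "norm \<dots> \<le> (\<Sum>b\<in>B. norm (frac (real k * r b) *\<^sub>R b))" by (rule norm_sum)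
    also have "\<dots> \<le> (\<Sum>b\<in>B. norm b)"
      by (intro sum_mono) (simp add: frac_lt_1 less_imp_le mult_left_le_one_le)
    finally show ?thesis .
  qed
  ultimately have "range w \<subseteq> {x \<in> L. norm x \<le> (\<Sum>b\<in>B. norm b)}" by blast
  then have "finite (range w)" using euclidean_lattice_bounded_finite[OF L] finite_subset by blast
  then have "\<not> inj w" using finite_imageD infinite_UNIV_nat by blast
  then obtain k1 k2 where "k1 < k2" "w k1 = w k2"
    unfolding inj_def by (metis linorder_neqE_nat)
  then have "real (k2 - k1) *\<^sub>R v = y k2 - y k1"
    unfolding w_def by (simp add: of_nat_diff scaleR_diff_left algebra_simps)
  also have "\<dots> \<in> L'" using euclidean_lattice_diff[OF L'_lattice y y] .
  finally show thesis using \<open>k1 < k2\<close> by (intro that[of "k2 - k1"]) auto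
qed

lemma notin_span_sublattice:
  fixes L L' :: "(real^'n) set"
  assumes "euclidean_lattice L" "sublattice L' L" "v \<in> L" "v \<noteq> 0" "rat_line v \<inter> L' = {0}"
  shows "v \<notin> span L'"
proof
  assume "v \<in> span L'"
  then obtain k :: nat where k: "k > 0" "real k *\<^sub>R v \<in> L'"
    using euclidean_lattice_multiple_in_sublattice[OF assms(1-3)] by blast
  moreover have "real k *\<^sub>R v \<in> rat_line v"
    unfolding rat_line_def by (intro CollectI exI[where x="of_nat k"]) simp
  ultimately have "real k *\<^sub>R v = 0" using assms(5) by blast
  then show False using k assms(4) by simp
qed

lemma min_vectors_mono:
  assumes "L' \<subseteq> L" "lattice_min L' = lattice_min L"
  shows "min_vectors L' \<subseteq> min_vectors L"
  using assms unfolding min_vectors_def by auto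

lemma outer_sq_min_vectors_subset: "outer_sq ` min_vectors L \<subseteq> outer_sq ` span L"
  unfolding min_vectors_def using span_superset by blast

lemma dim_outer_sq_min_vectors_le:
  "dim (outer_sq ` min_vectors L) \<le> (lattice_rank L + 1) choose 2"
  using dim_subset[OF outer_sq_min_vectors_subset] dim_outer_sq_span_le[of L]
  unfolding lattice_rank_def by (rule order.trans)

lemma perfectI:
  assumes "(lattice_rank L + 1) choose 2 \<le> dim (outer_sq ` min_vectors L)"
  shows "perfect L"
  unfolding perfect_def using assms dim_outer_sq_min_vectors_le by (rule antisym[rotated])

lemma perfect_span_outer_sq:
  assumes "perfect L"
  shows "span (outer_sq ` min_vectors L) = span (outer_sq ` span L)"
proof (rule dim_eq_span[OF outer_sq_min_vectors_subset])
  show "dim (outer_sq ` span L) \<le> dim (outer_sq ` min_vectors L)"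
    using dim_outer_sq_span_le[of L] assms unfolding perfect_def lattice_rank_def by simp
qed

lemma outer_sq_span_sublattice_subset:
  assumes "sublattice L' L" "lattice_min L' = lattice_min L" "perfect L'"
  shows "outer_sq ` span L' \<subseteq> span (outer_sq ` min_vectors L)"
proof -
  have "outer_sq ` span L' \<subseteq> span (outer_sq ` span L')" by (rule span_superset)
  also have "\<dots> = span (outer_sq ` min_vectors L')" using perfect_span_outer_sq[OF assms(3)] by simp
  also have "\<dots> \<subseteq> span (outer_sq ` min_vectors L)"
    using assms(1,2) min_vectors_mono[of L' L]
    by (intro span_mono image_mono) (auto simp: sublattice_def)
  finally show ?thesis .
qed

lemma dim_outer_sq_span_perfect:
  assumes "perfect L"
  shows "dim (outer_sq ` span L) = (lattice_rank L + 1) choose 2"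
  using arg_cong[OF perfect_span_outer_sq[OF assms], of dim] assms
  unfolding perfect_def by simp

lemma lattice_rank_lattice_sum_le:
  assumes "span B \<subseteq> span A"
  shows "lattice_rank (lattice_sum A B) \<le> lattice_rank A"
proof -
  have "lattice_sum A B \<subseteq> span A"
    using assms span_superset unfolding lattice_sum_def by (blast intro: span_add)
  then show ?thesis unfolding lattice_rank_def by (rule dim_mono)
qed

theorem corollary2p4:
  fixes \<Lambda> \<Lambda>' \<Lambda>'' :: "(real^'n) set" and m :: real and d :: nat and v :: "real^'n"
  assumes "euclidean_lattice \<Lambda>" and "lattice_min \<Lambda> = m" and "lattice_rank \<Lambda> = d"
    and "sublattice \<Lambda>' \<Lambda>" and "sublattice \<Lambda>'' \<Lambda>" and "\<Lambda>' \<noteq> \<Lambda>''"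
    and "perfect \<Lambda>'" and "perfect \<Lambda>''"
    and "lattice_min \<Lambda>' = m" and "lattice_min \<Lambda>'' = m"
    and "lattice_rank \<Lambda>' + 1 = d" and "lattice_rank \<Lambda>'' + 1 = d"
    and "lattice_rank (lattice_sum \<Lambda>' \<Lambda>'') = d"
    and "v \<in> min_vectors \<Lambda>"
    and "rat_line v \<inter> \<Lambda>' = {0}" and "rat_line v \<inter> \<Lambda>'' = {0}"
  shows "perfect \<Lambda>"
proof -
  have v: "v \<in> \<Lambda>" "v \<noteq> 0" using assms(14) unfolding min_vectors_def by simp_all
  have "\<Lambda>' \<subseteq> \<Lambda>" "\<Lambda>'' \<subseteq> \<Lambda>" using assms(4,5) by (auto simp: sublattice_def)
  then have span_sub: "span \<Lambda>' \<subseteq> span \<Lambda>" "span \<Lambda>'' \<subseteq> span \<Lambda>"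
    by (simp_all add: span_mono)
  have dims: "dim (span \<Lambda>') + 1 = dim (span \<Lambda>)" "dim (span \<Lambda>'') + 1 = dim (span \<Lambda>)"
    using assms(3,11,12) by (simp_all add: lattice_rank_def)
  have spans_differ: "\<not> span \<Lambda>'' \<subseteq> span \<Lambda>'"
    using lattice_rank_lattice_sum_le[of \<Lambda>'' \<Lambda>'] assms(11,13) by auto
  have v_outside: "v \<notin> span \<Lambda>'" "v \<notin> span \<Lambda>''"
    using notin_span_sublattice[OF assms(1) _ v] assms(4,5,15,16) by blast+
  have squares: "outer_sq ` span \<Lambda>' \<subseteq> span (outer_sq ` min_vectors \<Lambda>)"
      "outer_sq ` span \<Lambda>'' \<subseteq> span (outer_sq ` min_vectors \<Lambda>)"
    using outer_sq_span_sublattice_subset[OF assms(4) _ assms(7)]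
      outer_sq_span_sublattice_subset[OF assms(5) _ assms(8)] assms(2,9,10) by simp_all
  have dim_squares: "dim (span \<Lambda>) choose 2 \<le> dim (outer_sq ` span \<Lambda>')"
    using dim_outer_sq_span_perfect[OF assms(7)] assms(3,11) by (simp add: lattice_rank_def)
  have "outer_sq v \<in> span (outer_sq ` min_vectors \<Lambda>)" using assms(14) by (intro span_base imageI)
  then have "(dim (span \<Lambda>) + 1) choose 2 \<le> dim (span (outer_sq ` min_vectors \<Lambda>))"
    using dim_ge_if_contains_squares_of_two_hyperplanes[OF _ _ _ _ span_sub dims spans_differ
        span_superset[THEN subsetD, OF v(1)] v_outside squares _ dim_squares]
    by simp
  then show ?thesis by (intro perfectI) (simp add: lattice_rank_def)
qed

end
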